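(* Let $SC_2(x)=\sum_{n\ge0} sc_2(\mathcal{D}_n)x^n$, where $sc_2(\mathcal{D}_n)$ is the number of saturated chains of length 2 in the Dyck lattice $\mathcal{D}_n$. Then $$ SC_2(x)=\sum_{n\ge0}\Big(\sum_{\gamma\in\mathcal{D}_n}\big(2\cdot\#(du,du)_\gamma+\#(ddu)_\gamma+\#(duu)_\gamma\big)\Big)x^n . $$
   Context: A Dyck path of semilength $n$ is a lattice path from $(0,0)$ to $(2n,0)$ with steps $u=(1,1)$ and $d=(1,-1)$ never going below the $x$-axis, identified with a word over $\{u,d\}$. $\mathcal{D}_n$ is the set of Dyck paths of semilength $n$ ordered by containment: $\gamma\le\gamma'$ iff $\gamma$ lies weakly below $\gamma'$. A saturated chain of length $h$ is a sequence $\gamma^{(0)}<\cdots<\gamma^{(h)}$ in which each element covers the previous one. For words $\gamma_1,\ldots,\gamma_k$, $\#(\gamma_1,\ldots,\gamma_k)_\gamma$ denotes the number of sets of pairwise disjoint (non-overlapping) occurrences of the factors $\gamma_1,\ldots,\gamma_k$ in $\gamma$; thus $\#(du,du)_\gamma$ is the number of unordered pairs of distinct valleys of $\gamma$, and $\#(ddu)_\gamma$, $\#(duu)_\gamma$ are the numbers of occurrences of the factors $ddu$, $duu$ in $\gamma$. *)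

theory Defs
  imports Main "HOL-Computational_Algebra.Formal_Power_Series"
begin

datatype step = U | D

definition height :: "step list \<Rightarrow> nat \<Rightarrow> int" where
  "height w i = sum_list (map (\<lambda>s. if s = U then 1 else -1) (take i w))"

definition dyck_path :: "nat \<Rightarrow> step list \<Rightarrow> bool" where
  "dyck_path n w \<longleftrightarrow> length w = 2 * n \<and> (\<forall>i\<le>length w. height w i \<ge> 0)
      \<and> height w (length w) = 0"

definition Dyck :: "nat \<Rightarrow> step list set" where
  "Dyck n = {w. dyck_path n w}"

definition dyck_le :: "step list \<Rightarrow> step list \<Rightarrow> bool" where
  "dyck_le w w' \<longleftrightarrow> (\<forall>i\<le>length w. height w i \<le> height w' i)"

definition dyck_less :: "step list \<Rightarrow> step list \<Rightarrow> bool" where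
  "dyck_less w w' \<longleftrightarrow> dyck_le w w' \<and> w \<noteq> w'"

definition covers :: "nat \<Rightarrow> step list \<Rightarrow> step list \<Rightarrow> bool" where
  "covers n a b \<longleftrightarrow> a \<in> Dyck n \<and> b \<in> Dyck n \<and> dyck_less a b \<and>
      \<not> (\<exists>c\<in>Dyck n. dyck_less a c \<and> dyck_less c b)"

definition sc2 :: "nat \<Rightarrow> nat" where
  "sc2 n = card {(a, b, c). covers n a b \<and> covers n b c}"

definition occ :: "step list \<Rightarrow> step list \<Rightarrow> nat set" where
  "occ w p = {i. i + length p \<le> length w \<and> take (length p) (drop i w) = p}"

definition num_occ :: "step list \<Rightarrow> step list \<Rightarrow> nat" where
  "num_occ w p = card (occ w p)"

text \<open>#(p,p)_w: number of unordered pairs of disjoint occurrences of p in w\<close>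
definition num_pairs :: "step list \<Rightarrow> step list \<Rightarrow> nat" where
  "num_pairs w p = card {{i, j} | i j. i \<in> occ w p \<and> j \<in> occ w p \<and> i + length p \<le> j}"

end

theory Submission
  imports Defs
begin

text \<open>In the Dyck lattice, \<open>b\<close> covers \<open>a\<close> exactly when \<open>b\<close> arises from \<open>a\<close> by turning a valley \<open>du\<close>
  into a peak \<open>ud\<close>. Such a turn raises the height at a single position by 2, and heights of paths
  of equal length have equal parity there, so nothing lies strictly between. Conversely, at a lowest
  point where \<open>a\<close> lies strictly below \<open>b\<close>, the path \<open>a\<close> has a valley whose turn stays below \<open>b\<close>.
  Hence saturated 2-chains starting at \<open>\<gamma>\<close> correspond to a valley of \<open>\<gamma>\<close> followed by a valley of the
  turned path. The turned path keeps the other \<open>v - 1\<close> valleys of \<open>\<gamma>\<close> and gains one just before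
  (resp. after) the turned valley iff it is preceded by \<open>d\<close> (resp. followed by \<open>u\<close>); summing over
  the \<open>v\<close> valleys gives \<open>v(v - 1) + #(ddu) + #(duu) = 2 #(du,du) + #(ddu) + #(duu)\<close>.\<close>

definition step_height :: "step \<Rightarrow> int" where
  "step_height s = (if s = U then 1 else -1)"

lemma height_0 [simp]: "height w 0 = 0"
  by (simp add: height_def)

lemma height_Suc: "j < length w \<Longrightarrow> height w (Suc j) = height w j + step_height (w ! j)"
  by (simp add: height_def take_Suc_conv_app_nth step_height_def)

lemma height_ge_length: "length w \<le> j \<Longrightarrow> height w j = height w (length w)"
  by (simp add: height_def)

lemma even_height_plus_index: "j \<le> length w \<Longrightarrow> even (height w j + int j)"
proof (induction j)
  case (Suc j)
  then have "even (height w j + int j)" and "j < length w" by auto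
  moreover have "step_height (w ! j) \<in> {1, -1}" by (simp add: step_height_def)
  ultimately show ?case by (auto simp: height_Suc)
qed simp

text \<open>Heights of two words at the same position have the same parity.\<close>
lemma height_eq_or_gap:
  assumes "j \<le> length v" "j \<le> length w" "height v j \<le> height w j"
  shows "height v j = height w j \<or> height v j + 2 \<le> height w j"
proof -
  have "even (height v j + int j)" "even (height w j + int j)"
    by (rule even_height_plus_index, fact assms)+
  then show ?thesis using assms(3) by presburger
qed

lemma eq_if_heights_eq:
  assumes "length v = length w" "\<And>j. j \<le> length w \<Longrightarrow> height v j = height w j"
  shows "v = w"
proof (rule nth_equalityI)
  fix i assume "i < length v"
  with assms have "step_height (v ! i) = step_height (w ! i)"
    using height_Suc[of i v] height_Suc[of i w] by force
  then show "v ! i = w ! i" by (cases "v ! i"; cases "w ! i") (auto simp: step_height_def)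
qed (fact assms(1))

lemma Dyck_iff:
  "w \<in> Dyck n \<longleftrightarrow> length w = 2 * n \<and> (\<forall>i\<le>length w. height w i \<ge> 0) \<and> height w (length w) = 0"
  by (simp add: Dyck_def dyck_path_def)

lemma finite_Dyck: "finite (Dyck n)"
proof (rule finite_subset)
  show "Dyck n \<subseteq> {w. set w \<subseteq> UNIV \<and> length w = 2 * n}" by (auto simp: Dyck_iff)
  have "(UNIV :: step set) = {U, D}" using step.exhaust by blast
  then have "finite (UNIV :: step set)" by (metis finite.emptyI finite.insertI)
  then show "finite {w :: step list. set w \<subseteq> UNIV \<and> length w = 2 * n}"
    by (rule finite_lists_length_eq)
qed

lemma finite_occ: "finite (occ w p)"
  unfolding occ_def by (rule finite_subset[of _ "{..length w}"]) auto

lemma occ_two: "occ w [x, y] = {q. Suc q < length w \<and> w ! q = x \<and> w ! Suc q = y}"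
proof -
  have "take 2 (drop q w) = [w ! q, w ! Suc q]" if "Suc q < length w" for q
    using that by (metis Cons_nth_drop_Suc Suc_lessD numeral_2_eq_2 take_0 take_Suc_Cons)
  then show ?thesis unfolding occ_def by (auto simp: numeral_2_eq_2 Suc_le_eq)
qed

lemma occ_three:
  "occ w [x, y, z] = {q. Suc (Suc q) < length w \<and> w ! q = x \<and> w ! Suc q = y \<and> w ! Suc (Suc q) = z}"
proof -
  have "take 3 (drop q w) = [w ! q, w ! Suc q, w ! Suc (Suc q)]" if "Suc (Suc q) < length w" for q
    using that by (metis Cons_nth_drop_Suc Suc_lessD numeral_3_eq_3 take_0 take_Suc_Cons)
  then show ?thesis unfolding occ_def by (auto simp: numeral_3_eq_3 Suc_le_eq)
qed

lemma num_pairs_eq_choose_two: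
  assumes "p \<noteq> []" and separated: "\<And>i j. i \<in> occ w p \<Longrightarrow> j \<in> occ w p \<Longrightarrow> i < j \<Longrightarrow> i + length p \<le> j"
  shows "num_pairs w p = card (occ w p) choose 2"
proof -
  have "{{i, j} | i j. i \<in> occ w p \<and> j \<in> occ w p \<and> i + length p \<le> j} = {B. B \<subseteq> occ w p \<and> card B = 2}"
  proof (intro set_eqI iffI)
    fix B assume "B \<in> {B. B \<subseteq> occ w p \<and> card B = 2}"
    then obtain x y where B: "B = {x, y}" "x \<noteq> y" "x \<in> occ w p" "y \<in> occ w p"
      by (auto simp: card_2_iff)
    then have "B = {min x y, max x y}" "min x y < max x y"
      and "min x y \<in> occ w p" "max x y \<in> occ w p"
      by (auto simp: min_def max_def insert_commute)
    then show "B \<in> {{i, j} | i j. i \<in> occ w p \<and> j \<in> occ w p \<and> i + length p \<le> j}"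
      using separated by blast
  qed (use \<open>p \<noteq> []\<close> in \<open>auto simp: card_insert_if\<close>)
  then show ?thesis by (simp add: num_pairs_def n_subsets finite_occ)
qed

lemma valleys_separated: "i \<in> occ w [D, U] \<Longrightarrow> j \<in> occ w [D, U] \<Longrightarrow> i < j \<Longrightarrow> i + 2 \<le> j"
  by (cases "j = Suc i") (auto simp: occ_two)

definition turn_valley :: "nat \<Rightarrow> step list \<Rightarrow> step list" where
  "turn_valley p w = w[p := U, Suc p := D]"

lemma length_turn_valley [simp]: "length (turn_valley p w) = length w"
  by (simp add: turn_valley_def)

lemma nth_turn_valley:
  assumes "p \<in> occ w [D, U]"
  shows "turn_valley p w ! j = (if j = p then U else if j = Suc p then D else w ! j)"
  using assms by (simp add: occ_two turn_valley_def nth_list_update)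

lemma step_height_turn_valley:
  assumes "p \<in> occ w [D, U]"
  shows "step_height (turn_valley p w ! j) =
    step_height (w ! j) + (if j = p then 2 else if j = Suc p then -2 else 0)"
  using assms by (simp add: nth_turn_valley occ_two step_height_def)

lemma height_turn_valley:
  assumes "p \<in> occ w [D, U]"
  shows "height (turn_valley p w) j = height w j + (if j = Suc p then 2 else 0)"
proof (induction j)
  case (Suc j)
  show ?case
  proof (cases "j < length w")
    case True
    then show ?thesis
      using Suc by (simp add: height_Suc step_height_turn_valley[OF assms])
  next
    case False
    then have "height (turn_valley p w) (Suc j) = height (turn_valley p w) j"
      and "height w (Suc j) = height w j"
      using False height_ge_length[of "turn_valley p w" j] height_ge_length[of "turn_valley p w" "Suc j"]
        height_ge_length[of w j] height_ge_length[of w "Suc j"] by simp_all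
    then show ?thesis using Suc assms False by (simp add: occ_two)
  qed
qed simp

lemma turn_valley_in_Dyck: "a \<in> Dyck n \<Longrightarrow> p \<in> occ a [D, U] \<Longrightarrow> turn_valley p a \<in> Dyck n"
  by (auto simp: Dyck_iff height_turn_valley occ_two)

lemma dyck_less_turn_valley:
  assumes "p \<in> occ a [D, U]"
  shows "dyck_less a (turn_valley p a)"
proof -
  have "height (turn_valley p a) (Suc p) \<noteq> height a (Suc p)"
    by (simp add: height_turn_valley[OF assms])
  then have "turn_valley p a \<noteq> a" by metis
  then show ?thesis by (auto simp: dyck_less_def dyck_le_def height_turn_valley[OF assms])
qed

text \<open>Parity leaves only the two extreme heights at \<open>Suc p\<close>.\<close>
lemma between_turn_valley:
  assumes p: "p \<in> occ a [D, U]" and len: "length c = length a"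
    and below: "dyck_le a c" and above: "dyck_le c (turn_valley p a)"
  shows "c = a \<or> c = turn_valley p a"
proof -
  have a_le_c: "height a j \<le> height c j" if "j \<le> length a" for j
    using below that by (simp add: dyck_le_def)
  have c_le: "height c j \<le> height a j + (if j = Suc p then 2 else 0)" if "j \<le> length a" for j
    using above that len by (simp add: dyck_le_def height_turn_valley[OF p])
  have "Suc p \<le> length a" using p by (simp add: occ_two)
  then have "height c (Suc p) = height a (Suc p) \<or> height a (Suc p) + 2 \<le> height c (Suc p)"
    using height_eq_or_gap[of "Suc p" a c] a_le_c len by auto
  then show ?thesis
  proof
    assume at_p: "height c (Suc p) = height a (Suc p)"
    have "height c j = height a j" if "j \<le> length a" for j
      using a_le_c[OF that] c_le[OF that] at_p by (cases "j = Suc p") simp_all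
    then have "c = a" by (rule eq_if_heights_eq[OF len])
    then show ?thesis ..
  next
    assume at_p: "height a (Suc p) + 2 \<le> height c (Suc p)"
    have "height c j = height (turn_valley p a) j" if "j \<le> length a" for j
      using a_le_c[OF that] c_le[OF that] at_p
      by (cases "j = Suc p") (simp_all add: height_turn_valley[OF p])
    then have "c = turn_valley p a" using len by (intro eq_if_heights_eq) simp_all
    then show ?thesis ..
  qed
qed

lemma covers_turn_valley:
  assumes a: "a \<in> Dyck n" and p: "p \<in> occ a [D, U]"
  shows "covers n a (turn_valley p a)"
proof -
  have "\<not> (dyck_less a c \<and> dyck_less c (turn_valley p a))" if "c \<in> Dyck n" for c
  proof -
    have "length c = length a" using that a by (simp add: Dyck_iff)
    then show ?thesis using between_turn_valley[OF p] by (auto simp: dyck_less_def)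
  qed
  then show ?thesis
    using turn_valley_in_Dyck[OF a p] dyck_less_turn_valley[OF p] a by (auto simp: covers_def)
qed

text \<open>A lowest point of \<open>a\<close> among those where \<open>a\<close> lies strictly below \<open>b\<close> is the middle of a valley:
  a step up into it, or a step down out of it, would give a lower such point.\<close>
lemma lowest_gap_is_valley:
  assumes a: "a \<in> Dyck n" and b: "b \<in> Dyck n"
    and gap: "k \<le> length a" "height a k < height b k"
    and lowest: "\<And>j. j \<le> length a \<Longrightarrow> height a j < height b j \<Longrightarrow> height a k \<le> height a j"
  obtains p where "k = Suc p" and "p \<in> occ a [D, U]"
proof -
  have len: "length b = length a" using a b by (simp add: Dyck_iff)
  have "k \<noteq> 0" using gap by (metis height_0 less_irrefl)
  then obtain p where k: "k = Suc p" by (cases k) auto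
  have "k \<noteq> length a" using gap a b len by (auto simp: Dyck_iff)
  with gap have "k < length a" by simp
  have step_bounds: "step_height s \<in> {1, -1}" for s by (simp add: step_height_def)
  have "a ! p = D"
  proof (rule ccontr)
    assume "a ! p \<noteq> D"
    then have "a ! p = U" by (cases "a ! p") auto
    then have "height a k = height a p + 1" using k \<open>k < length a\<close> by (simp add: height_Suc step_height_def)
    moreover have "height b k \<le> height b p + 1"
      using k \<open>k < length a\<close> len step_bounds[of "b ! p"] by (auto simp: height_Suc)
    ultimately show False using lowest[of p] gap k by fastforce
  qed
  moreover have "a ! k = U"
  proof (rule ccontr)
    assume "a ! k \<noteq> U"
    then have "height a (Suc k) = height a k - 1" using \<open>k < length a\<close> by (simp add: height_Suc step_height_def)
    moreover have "height b k - 1 \<le> height b (Suc k)"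
      using \<open>k < length a\<close> len step_bounds[of "b ! k"] by (auto simp: height_Suc)
    ultimately show False using lowest[of "Suc k"] gap \<open>k < length a\<close> by fastforce
  qed
  ultimately have "p \<in> occ a [D, U]" using k \<open>k < length a\<close> by (simp add: occ_two)
  with k show ?thesis by (rule that)
qed

lemma exists_turn_valley_below:
  assumes a: "a \<in> Dyck n" and b: "b \<in> Dyck n" and less: "dyck_less a b"
  shows "\<exists>p\<in>occ a [D, U]. dyck_le (turn_valley p a) b"
proof -
  have len: "length b = length a" using a b by (simp add: Dyck_iff)
  have le: "height a j \<le> height b j" if "j \<le> length a" for j
    using less that by (simp add: dyck_less_def dyck_le_def)
  let ?gaps = "{j. j \<le> length a \<and> height a j < height b j}"
  have nonempty: "?gaps \<noteq> {}"
  proof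
    assume "?gaps = {}"
    then have "height a j = height b j" if "j \<le> length a" for j
      using le[OF that] that by (auto simp: not_less)
    then have "a = b" using len by (intro eq_if_heights_eq) auto
    with less show False by (simp add: dyck_less_def)
  qed
  have "finite ?gaps" by simp
  define k where "k = arg_min_on (height a) ?gaps"
  from arg_min_if_finite[OF \<open>finite ?gaps\<close> nonempty, of "height a", folded k_def]
  have gap: "k \<le> length a" "height a k < height b k"
    and lowest: "\<And>j. j \<le> length a \<Longrightarrow> height a j < height b j \<Longrightarrow> height a k \<le> height a j"
    by (auto simp: not_less)
  obtain p where k: "k = Suc p" and p: "p \<in> occ a [D, U]"
    using lowest_gap_is_valley[OF a b gap lowest] by blast
  have "height a k + 2 \<le> height b k"
    using height_eq_or_gap[of k a b] gap len by auto
  then have "dyck_le (turn_valley p a) b"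
    using le k by (auto simp: dyck_le_def height_turn_valley[OF p])
  with p show ?thesis ..
qed

lemma covers_iff_turn_valley:
  "covers n a b \<longleftrightarrow> a \<in> Dyck n \<and> (\<exists>p\<in>occ a [D, U]. b = turn_valley p a)"
proof
  assume cov: "covers n a b"
  then have a: "a \<in> Dyck n" and b: "b \<in> Dyck n" and less: "dyck_less a b"
    by (auto simp: covers_def)
  obtain p where p: "p \<in> occ a [D, U]" and below: "dyck_le (turn_valley p a) b"
    using exists_turn_valley_below[OF a b less] by blast
  have "b = turn_valley p a"
  proof (rule ccontr)
    assume "b \<noteq> turn_valley p a"
    then have "dyck_less (turn_valley p a) b" using below by (auto simp: dyck_less_def)
    then show False
      using cov turn_valley_in_Dyck[OF a p] dyck_less_turn_valley[OF p] by (auto simp: covers_def)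
  qed
  with a p show "a \<in> Dyck n \<and> (\<exists>p\<in>occ a [D, U]. b = turn_valley p a)" by blast
qed (auto intro: covers_turn_valley)

lemma valleys_turn_valley:
  assumes p: "p \<in> occ w [D, U]"
  shows "occ (turn_valley p w) [D, U] =
    (occ w [D, U] - {p}) \<union> {q \<in> occ w [D, D, U]. Suc q = p} \<union> Suc ` {q \<in> occ w [D, U, U]. q = p}"
proof (rule set_eqI)
  fix q
  have "w ! p = D" "w ! Suc p = U" "Suc p < length w" using p by (simp_all add: occ_two)
  then show "q \<in> occ (turn_valley p w) [D, U] \<longleftrightarrow>
    q \<in> (occ w [D, U] - {p}) \<union> {q \<in> occ w [D, D, U]. Suc q = p} \<union> Suc ` {q \<in> occ w [D, U, U]. q = p}"
    unfolding occ_two occ_three nth_turn_valley[OF p]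
    by (cases "q = p"; cases "Suc q = p"; cases "q = Suc p") auto
qed

lemma card_valleys_turn_valley:
  assumes p: "p \<in> occ w [D, U]"
  shows "card (occ (turn_valley p w) [D, U]) = (card (occ w [D, U]) - 1)
    + card {q \<in> occ w [D, D, U]. Suc q = p} + card {q \<in> occ w [D, U, U]. q = p}"
proof -
  let ?V = "occ w [D, U]" and ?A = "{q \<in> occ w [D, D, U]. Suc q = p}" and ?B = "{q \<in> occ w [D, U, U]. q = p}"
  have "w ! p = D" "w ! Suc p = U" using p by (simp_all add: occ_two)
  then have disjoint: "(?V - {p}) \<inter> ?A = {}" "((?V - {p}) \<union> ?A) \<inter> Suc ` ?B = {}"
    by (auto simp: occ_two occ_three)
  have "card (occ (turn_valley p w) [D, U]) = card ((?V - {p}) \<union> ?A) + card (Suc ` ?B)"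
    unfolding valleys_turn_valley[OF p] by (rule card_Un_disjoint) (use disjoint(2) finite_occ in auto)
  also have "\<dots> = card (?V - {p}) + card ?A + card ?B"
    by (subst card_Un_disjoint) (use disjoint(1) finite_occ in \<open>auto simp: card_image\<close>)
  finally show ?thesis using p by (simp add: finite_occ)
qed

text \<open>Each \<open>ddu\<close> (resp. \<open>duu\<close>) factor is counted at exactly one valley: the one it ends (resp. starts) with.\<close>
lemma sum_card_valleys_turn_valley:
  "(\<Sum>p\<in>occ w [D, U]. card (occ (turn_valley p w) [D, U])) =
    2 * num_pairs w [D, U] + num_occ w [D, D, U] + num_occ w [D, U, U]"
proof -
  let ?V = "occ w [D, U]"
  have "(\<Sum>p\<in>?V. card {q \<in> occ w [D, D, U]. Suc q = p}) = 1 * num_occ w [D, D, U]"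
    unfolding num_occ_def
  proof (rule sum_multicount[OF finite_occ finite_occ], intro ballI)
    fix q assume "q \<in> occ w [D, D, U]"
    then have "{p \<in> ?V. Suc q = p} = {Suc q}" by (auto simp: occ_two occ_three)
    then show "card {p \<in> ?V. Suc q = p} = 1" by simp
  qed
  moreover have "(\<Sum>p\<in>?V. card {q \<in> occ w [D, U, U]. q = p}) = 1 * num_occ w [D, U, U]"
    unfolding num_occ_def
  proof (rule sum_multicount[OF finite_occ finite_occ], intro ballI)
    fix q assume "q \<in> occ w [D, U, U]"
    then have "{p \<in> ?V. q = p} = {q}" by (auto simp: occ_two occ_three)
    then show "card {p \<in> ?V. q = p} = 1" by simp
  qed
  moreover have "card ?V * (card ?V - 1) = 2 * num_pairs w [D, U]"
  proof -
    have "even (card ?V * (card ?V - 1))" by (cases "even (card ?V)") auto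
    then show ?thesis
      using num_pairs_eq_choose_two[of "[D, U]" w] valleys_separated by (simp add: choose_two)
  qed
  ultimately show ?thesis
    by (simp add: card_valleys_turn_valley sum.distrib)
qed

lemma turn_valley_inj:
  assumes "p \<in> occ w [D, U]" "p' \<in> occ w [D, U]" "turn_valley p w = turn_valley p' w"
  shows "p = p'"
proof (rule ccontr)
  assume "p \<noteq> p'"
  then have "turn_valley p' w ! p = D"
    using assms(1,2) by (auto simp: nth_turn_valley occ_two)
  moreover have "turn_valley p w ! p = U" using assms(1) by (simp add: nth_turn_valley)
  ultimately show False using assms(3) by simp
qed

text \<open>A saturated 2-chain \<open>(a, b, c)\<close> is determined by \<open>a\<close>, the valley of \<open>a\<close> turned into \<open>b\<close>
  and the valley of \<open>b\<close> turned into \<open>c\<close>.\<close>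
lemma sc2_eq_sum_valleys:
  "sc2 n = (\<Sum>a\<in>Dyck n. \<Sum>p\<in>occ a [D, U]. card (occ (turn_valley p a) [D, U]))"
proof -
  let ?S = "SIGMA a:Dyck n. SIGMA p:occ a [D, U]. occ (turn_valley p a) [D, U]"
  define chain where "chain = (\<lambda>(a, p, q). (a, turn_valley p a, turn_valley q (turn_valley p a)))"
  have "{(a, b, c). covers n a b \<and> covers n b c} = chain ` ?S"
    by (auto simp: chain_def covers_iff_turn_valley turn_valley_in_Dyck image_iff) blast
  moreover have "inj_on chain ?S"
    by (rule inj_onI) (auto simp: chain_def dest: turn_valley_inj)
  ultimately have "sc2 n = card ?S" by (simp add: sc2_def card_image)
  also have "\<dots> = (\<Sum>a\<in>Dyck n. \<Sum>p\<in>occ a [D, U]. card (occ (turn_valley p a) [D, U]))"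
    by (simp add: finite_Dyck finite_occ)
  finally show ?thesis .
qed

theorem mainTheorem2:
  shows "(Abs_fps (\<lambda>n. sc2 n) :: nat fps) =
    Abs_fps (\<lambda>n. \<Sum>\<gamma>\<in>Dyck n. 2 * num_pairs \<gamma> [D, U] + num_occ \<gamma> [D, D, U] + num_occ \<gamma> [D, U, U])"
  by (simp add: sc2_eq_sum_valleys sum_card_valleys_turn_valley)

end
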